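(* Let $X_1,X_2$ be Banach spaces and let $\Phi$ be a Young function satisfying the Mulholland condition. Then the $F$-space $(X_1\oplus X_2,d_\Phi)$ has the Hahn–Banach extension property: for every closed subspace $M$ and every continuous linear functional $\varphi:M\to\mathbb C$ there is a continuous linear functional $\varphi':X_1\oplus X_2\to\mathbb C$ with $\varphi'|_M=\varphi$.
   Context: A Young function is a convex, left semicontinuous, even $\Phi:\mathbb R\to[0,\infty]$ with $\Phi(0)=0$, $\lim_{x\to\infty}\Phi(x)=\infty$; it satisfies the Mulholland condition if it is continuous and strictly increasing on $[0,\infty)$ and $\log\Phi(x)$ is convex as a function of $\log x$. The metric is $d_\Phi((x_1,x_2),(y_1,y_2))=\Phi^{-1}(\Phi(\|x_1-y_1\|)+\Phi(\|x_2-y_2\|))$, where $\Phi^{-1}$ is the inverse of $\Phi|_{[0,\infty)}$. *)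

theory Defs
  imports "HOL-Analysis.Analysis"
begin

text \<open>The library has no class of complex vector spaces; a complex Banach space is a
real Banach space with a complex scalar multiplication extending the real one,
satisfying the vector space axioms and absolute homogeneity of the norm.\<close>

class complex_banach = banach +
  fixes scaleC :: "complex \<Rightarrow> 'a \<Rightarrow> 'a" (infixr \<open>*\<^sub>C\<close> 75)
  assumes scaleC_add_right: "a *\<^sub>C (x + y) = a *\<^sub>C x + a *\<^sub>C y"
    and scaleC_add_left: "(a + b) *\<^sub>C x = a *\<^sub>C x + b *\<^sub>C x"
    and scaleC_scaleC: "a *\<^sub>C (b *\<^sub>C x) = (a * b) *\<^sub>C x"
    and scaleC_one: "1 *\<^sub>C x = x"
    and scaleR_scaleC: "scaleR r x = complex_of_real r *\<^sub>C x"
    and norm_scaleC: "norm (a *\<^sub>C x) = cmod a * norm x"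

text \<open>Young functions are taken real-valued: the Mulholland condition (continuity and
strict monotonicity on [0,\<infinity>)) forces finiteness of \<Phi> everywhere, so nothing is lost.\<close>

definition young_function :: "(real \<Rightarrow> real) \<Rightarrow> bool" where
  "young_function \<Phi> \<longleftrightarrow>
     convex_on UNIV \<Phi> \<and>
     (\<forall>x. continuous (at_left x) \<Phi>) \<and>
     (\<forall>x. \<Phi> (- x) = \<Phi> x) \<and>
     (\<forall>x. \<Phi> x \<ge> 0) \<and>
     \<Phi> 0 = 0 \<and>
     filterlim \<Phi> at_top at_top"

definition mulholland :: "(real \<Rightarrow> real) \<Rightarrow> bool" where
  "mulholland \<Phi> \<longleftrightarrow>
     continuous_on {0..} \<Phi> \<and>
     strict_mono_on {0..} \<Phi> \<and>
     convex_on UNIV (\<lambda>t. ln (\<Phi> (exp t)))"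

definition Phi_inv :: "(real \<Rightarrow> real) \<Rightarrow> real \<Rightarrow> real" where
  "Phi_inv \<Phi> y = (THE x. x \<ge> 0 \<and> \<Phi> x = y)"

definition dPhi :: "(real \<Rightarrow> real) \<Rightarrow> ('a::real_normed_vector \<times> 'b::real_normed_vector)
                     \<Rightarrow> ('a \<times> 'b) \<Rightarrow> real" where
  "dPhi \<Phi> x y = Phi_inv \<Phi> (\<Phi> (norm (fst x - fst y)) + \<Phi> (norm (snd x - snd y)))"

definition csubspace_sum :: "('a::complex_banach \<times> 'b::complex_banach) set \<Rightarrow> bool" where
  "csubspace_sum M \<longleftrightarrow> (0, 0) \<in> M \<and>
     (\<forall>x\<in>M. \<forall>y\<in>M. x + y \<in> M) \<and>
     (\<forall>c. \<forall>x\<in>M. (c *\<^sub>C fst x, c *\<^sub>C snd x) \<in> M)"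

definition clinear_on_sum :: "('a::complex_banach \<times> 'b::complex_banach) set
                               \<Rightarrow> ('a \<times> 'b \<Rightarrow> complex) \<Rightarrow> bool" where
  "clinear_on_sum M f \<longleftrightarrow>
     (\<forall>x\<in>M. \<forall>y\<in>M. f (x + y) = f x + f y) \<and>
     (\<forall>c. \<forall>x\<in>M. f (c *\<^sub>C fst x, c *\<^sub>C snd x) = c * f x)"

definition dPhi_closed :: "(real \<Rightarrow> real) \<Rightarrow> ('a::real_normed_vector \<times> 'b::real_normed_vector) set \<Rightarrow> bool" where
  "dPhi_closed \<Phi> M \<longleftrightarrow> (\<forall>x. (\<forall>e>0. \<exists>y\<in>M. dPhi \<Phi> x y < e) \<longrightarrow> x \<in> M)"

definition dPhi_continuous_on :: "(real \<Rightarrow> real) \<Rightarrow> ('a::real_normed_vector \<times> 'b::real_normed_vector) set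
                                    \<Rightarrow> ('a \<times> 'b \<Rightarrow> complex) \<Rightarrow> bool" where
  "dPhi_continuous_on \<Phi> M f \<longleftrightarrow>
     (\<forall>x\<in>M. \<forall>e>0. \<exists>d>0. \<forall>y\<in>M. dPhi \<Phi> x y < d \<longrightarrow> cmod (f y - f x) < e)"

end

(*
  Since Phi is continuous and strictly increasing on [0,oo) with Phi 0 = 0, the metric d_Phi is
  uniformly equivalent to the norm of X1 (+) X2: norm (x - y) <= 2 d_Phi(x, y), and d_Phi(x, y)
  is small as soon as norm (x - y) is. Hence a d_Phi-continuous linear functional on M is
  bounded by K * norm, and the complex Hahn-Banach theorem extends it to the whole space with
  the same bound, which makes the extension d_Phi-continuous. The Hahn-Banach theorem itself is
  proved by Zorn's lemma on graphs of dominated linear functionals, followed by the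
  complexification U x - i U (i x) of a real extension U of Re phi.
*)
theory Submission
  imports Defs
begin

section \<open>The real Hahn-Banach theorem\<close>

definition sublinear :: "('v::real_vector \<Rightarrow> real) \<Rightarrow> bool" where
  "sublinear p \<longleftrightarrow> (\<forall>x y. p (x + y) \<le> p x + p y) \<and> (\<forall>c x. 0 \<le> c \<longrightarrow> p (c *\<^sub>R x) = c * p x)"

lemma sublinear_add: "sublinear p \<Longrightarrow> p (x + y) \<le> p x + p y"
  and sublinear_scale: "sublinear p \<Longrightarrow> 0 \<le> c \<Longrightarrow> p (c *\<^sub>R x) = c * p x"
  unfolding sublinear_def by blast+

definition dominated_graph :: "('v::real_vector \<Rightarrow> real) \<Rightarrow> ('v \<times> real) set \<Rightarrow> bool" where
  "dominated_graph p G \<longleftrightarrow> subspace G \<and> single_valued G \<and> (\<forall>(x, a)\<in>G. a \<le> p x)"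

lemma subspace_Union_chain:
  assumes "C \<noteq> {}" "chain\<^sub>\<subseteq> C" "\<And>S. S \<in> C \<Longrightarrow> subspace S"
  shows "subspace (\<Union>C)"
  unfolding subspace_def
proof (intro conjI ballI allI)
  show "0 \<in> \<Union>C" using assms(1,3) subspace_0 by blast
next
  fix x y assume "x \<in> \<Union>C" "y \<in> \<Union>C"
  then obtain S T where "S \<in> C" "T \<in> C" "x \<in> S" "y \<in> T" by blast
  with assms(2,3) show "x + y \<in> \<Union>C"
    unfolding chain_subset_def by (metis UnionI subsetD subspace_add)
next
  fix c x assume "x \<in> \<Union>C"
  with assms(3) show "c *\<^sub>R x \<in> \<Union>C" by (blast intro: subspace_scale)
qed

lemma single_valued_Union_chain:
  assumes "chain\<^sub>\<subseteq> C" "\<And>R. R \<in> C \<Longrightarrow> single_valued R"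
  shows "single_valued (\<Union>C)"
proof (rule single_valuedI)
  fix x y z assume "(x, y) \<in> \<Union>C" "(x, z) \<in> \<Union>C"
  then obtain R S where "R \<in> C" "S \<in> C" "(x, y) \<in> R" "(x, z) \<in> S" by blast
  with assms show "y = z" unfolding chain_subset_def by (metis single_valuedD subsetD)
qed

lemma single_valued_subspace_iff:
  fixes G :: "('v::real_vector \<times> real) set"
  assumes "subspace G"
  shows "single_valued G \<longleftrightarrow> (\<forall>b. (0, b) \<in> G \<longrightarrow> b = 0)"
proof
  assume "single_valued G"
  with subspace_0[OF assms] show "\<forall>b. (0, b) \<in> G \<longrightarrow> b = 0"
    by (auto simp: zero_prod_def dest: single_valuedD)
next
  assume zero: "\<forall>b. (0, b) \<in> G \<longrightarrow> b = 0"
  show "single_valued G"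
  proof (rule single_valuedI)
    fix x a b assume "(x, a) \<in> G" "(x, b) \<in> G"
    then have "(0, a - b) \<in> G" using subspace_diff[OF assms] by fastforce
    with zero have "a - b = 0" by blast
    then show "a = b" by simp
  qed
qed

lemma dominated_graph_Union_chain:
  assumes "C \<noteq> {}" "chain\<^sub>\<subseteq> C" "\<And>G. G \<in> C \<Longrightarrow> dominated_graph p G"
  shows "dominated_graph p (\<Union>C)"
  using assms subspace_Union_chain[OF assms(1,2)] single_valued_Union_chain[OF assms(2)]
  unfolding dominated_graph_def by blast

lemma dominated_extension_value:
  assumes p: "sublinear p" and G: "subspace G" "\<forall>(y, a)\<in>G. a \<le> p y"
  obtains c where "\<And>y a. (y, a) \<in> G \<Longrightarrow> a - p (y - x0) \<le> c"
    and "\<And>z b. (z, b) \<in> G \<Longrightarrow> c \<le> p (z + x0) - b"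
proof
  have sep: "a - p (y - x0) \<le> p (z + x0) - b" if "(y, a) \<in> G" "(z, b) \<in> G" for y a z b
  proof -
    have "a + b \<le> p (y + z)" using G subspace_add[OF G(1) that] by fastforce
    also have "\<dots> \<le> p (y - x0) + p (z + x0)"
      using sublinear_add[OF p, of "y - x0" "z + x0"] by simp
    finally show ?thesis by simp
  qed
  define S where "S = {a - p (y - x0) | y a. (y, a) \<in> G}"
  have G0: "(0, 0) \<in> G" using subspace_0[OF G(1)] by (simp add: zero_prod_def)
  have bound: "s \<le> p (z + x0) - b" if "s \<in> S" "(z, b) \<in> G" for s z b
    using that sep unfolding S_def by blast
  show "Sup S \<le> p (z + x0) - b" if "(z, b) \<in> G" for z b
    by (rule cSup_least) (use G0 bound that in \<open>auto simp: S_def\<close>)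
  have "bdd_above S" using bound[OF _ G0] by (rule bdd_aboveI)
  then show "a - p (y - x0) \<le> Sup S" if "(y, a) \<in> G" for y a
    by (rule cSup_upper[rotated]) (use that in \<open>auto simp: S_def\<close>)
qed

lemma dominated_extension_le:
  assumes p: "sublinear p" and sub: "subspace G" and dom: "\<forall>(y, a)\<in>G. a \<le> p y"
    and c1: "\<And>y a. (y, a) \<in> G \<Longrightarrow> a - p (y - x0) \<le> c"
    and c2: "\<And>z b. (z, b) \<in> G \<Longrightarrow> c \<le> p (z + x0) - b"
    and ya: "(y, a) \<in> G"
  shows "a + t * c \<le> p (y + t *\<^sub>R x0)"
proof (cases t "0 :: real" rule: linorder_cases)
  case less
  define s where "s = - t"
  have s: "0 < s" using less by (simp add: s_def)
  have "(1 / s) *\<^sub>R y - x0 = (1 / s) *\<^sub>R (y + t *\<^sub>R x0)"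
    using s by (simp add: s_def algebra_simps)
  then have "a / s - (1 / s) * p (y + t *\<^sub>R x0) \<le> c"
    using c1[of "(1 / s) *\<^sub>R y" "(1 / s) * a"] subspace_scale[OF sub ya, of "1 / s"]
      sublinear_scale[OF p, of "1 / s"] s by simp
  then have "a - p (y + t *\<^sub>R x0) \<le> s * c" using s by (simp add: field_simps)
  then show ?thesis by (simp add: s_def)
next
  case equal
  then show ?thesis using dom ya by auto
next
  case greater
  have "(1 / t) *\<^sub>R y + x0 = (1 / t) *\<^sub>R (y + t *\<^sub>R x0)"
    using greater by (simp add: algebra_simps)
  then have "c \<le> (1 / t) * p (y + t *\<^sub>R x0) - a / t"
    using c2[of "(1 / t) *\<^sub>R y" "(1 / t) * a"] subspace_scale[OF sub ya, of "1 / t"]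
      sublinear_scale[OF p, of "1 / t"] greater by simp
  then show ?thesis using greater by (simp add: field_simps)
qed

lemma dominated_graph_extend:
  assumes p: "sublinear p" and G: "dominated_graph p G" and x0: "x0 \<notin> Domain G"
  obtains G' where "dominated_graph p G'" "G \<subset> G'"
proof -
  have sub: "subspace G" and sv: "single_valued G" and dom: "\<forall>(y, a)\<in>G. a \<le> p y"
    using G unfolding dominated_graph_def by auto
  obtain c where c1: "\<And>y a. (y, a) \<in> G \<Longrightarrow> a - p (y - x0) \<le> c"
    and c2: "\<And>z b. (z, b) \<in> G \<Longrightarrow> c \<le> p (z + x0) - b"
    using dominated_extension_value[OF p sub dom] by blast
  define G' where "G' = {u + v | u v. u \<in> G \<and> v \<in> span {(x0, c)}}"
  have G'_iff: "q \<in> G' \<longleftrightarrow> (\<exists>y a t. (y, a) \<in> G \<and> q = (y + t *\<^sub>R x0, a + t * c))" for q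
    unfolding G'_def span_singleton by force
  have sub': "subspace G'"
    unfolding G'_def by (rule subspace_sums[OF sub subspace_span])
  have "a + t * c \<le> p (y + t *\<^sub>R x0)" if "(y, a) \<in> G" for y a t
    using dominated_extension_le[OF p sub dom c1 c2 that] .
  then have dom': "\<forall>(x, a)\<in>G'. a \<le> p x" by (auto simp: G'_iff)
  have "b = 0" if b: "(0, b) \<in> G'" for b
  proof -
    obtain y a t where ya: "(y, a) \<in> G" and eq: "0 = y + t *\<^sub>R x0" "b = a + t * c"
      using b G'_iff by auto
    have "t = 0"
    proof (rule ccontr)
      assume "t \<noteq> 0"
      moreover have "y = - t *\<^sub>R x0" using eq(1) by (simp add: eq_neg_iff_add_eq_0)
      ultimately have "(x0, - a / t) = (- 1 / t) *\<^sub>R (y, a)" by simp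
      then show False using x0 subspace_scale[OF sub ya] by (metis Domain.intros)
    qed
    then show ?thesis using eq ya sv sub single_valued_subspace_iff by auto
  qed
  then have sv': "single_valued G'" using single_valued_subspace_iff[OF sub'] by blast
  have "G \<subseteq> G'" by (force simp: G'_iff)
  moreover have "(x0, c) \<in> G' - G" using x0 subspace_0[OF sub] by (force simp: G'_iff zero_prod_def)
  ultimately show ?thesis
    using that sub' sv' dom' unfolding dominated_graph_def by blast
qed

lemma subspace_single_valued_total_linear:
  fixes G :: "('v::real_vector \<times> real) set"
  assumes sub: "subspace G" and sv: "single_valued G" and total: "Domain G = UNIV"
  obtains g where "linear g" "\<And>x. (x, g x) \<in> G"
proof
  define g where "g x = (THE a. (x, a) \<in> G)" for x
  show gG: "(x, g x) \<in> G" for x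
  proof -
    have "x \<in> Domain G" using total by simp
    then have "\<exists>!a. (x, a) \<in> G" using sv by (auto dest: single_valuedD)
    then show ?thesis unfolding g_def by (rule theI')
  qed
  show "linear g"
  proof (rule linearI)
    show "g (x + y) = g x + g y" for x y
      using subspace_add[OF sub gG gG] gG sv by (auto dest: single_valuedD)
    show "g (c *\<^sub>R x) = c *\<^sub>R g x" for c x
      using subspace_scale[OF sub gG, of c] gG sv by (auto dest: single_valuedD)
  qed
qed

lemma subspace_graph:
  fixes f :: "'v::real_vector \<Rightarrow> real"
  assumes M: "subspace M"
    and f_add: "\<And>x y. x \<in> M \<Longrightarrow> y \<in> M \<Longrightarrow> f (x + y) = f x + f y"
    and f_scale: "\<And>c x. x \<in> M \<Longrightarrow> f (c *\<^sub>R x) = c * f x"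
  shows "subspace ((\<lambda>x. (x, f x)) ` M)"
  unfolding subspace_def
proof (intro conjI ballI allI)
  have "f 0 = 0" using f_scale[OF subspace_0[OF M], of 0] by simp
  then show "0 \<in> (\<lambda>x. (x, f x)) ` M" using subspace_0[OF M] by (force simp: zero_prod_def)
next
  fix u v assume "u \<in> (\<lambda>x. (x, f x)) ` M" "v \<in> (\<lambda>x. (x, f x)) ` M"
  then show "u + v \<in> (\<lambda>x. (x, f x)) ` M"
    using M f_add by (auto simp: image_iff intro!: bexI[of _ "fst u + fst v"] subspace_add)
next
  fix c u assume "u \<in> (\<lambda>x. (x, f x)) ` M"
  then show "c *\<^sub>R u \<in> (\<lambda>x. (x, f x)) ` M"
    using M f_scale by (auto simp: image_iff intro!: bexI[of _ "c *\<^sub>R fst u"] subspace_scale)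
qed

lemma total_dominated_graph_exists:
  assumes p: "sublinear p" and F: "dominated_graph p F"
  obtains G where "dominated_graph p G" "F \<subseteq> G" "Domain G = UNIV"
proof -
  define A where "A = {G. dominated_graph p G \<and> F \<subseteq> G}"
  have "\<forall>C\<in>chains A. \<exists>U\<in>A. \<forall>G\<in>C. G \<subseteq> U"
  proof
    fix C assume C: "C \<in> chains A"
    show "\<exists>U\<in>A. \<forall>G\<in>C. G \<subseteq> U"
    proof (cases "C = {}")
      case True
      with F show ?thesis by (auto simp: A_def)
    next
      case False
      with C have "\<Union>C \<in> A"
        unfolding A_def chains_def by (auto intro!: dominated_graph_Union_chain)
      then show ?thesis by blast
    qed
  qed
  then obtain G where "G \<in> A" and max: "\<forall>G'\<in>A. G \<subseteq> G' \<longrightarrow> G' = G"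
    using Zorn_Lemma2 by blast
  then have G: "dominated_graph p G" and "F \<subseteq> G" by (auto simp: A_def)
  have "Domain G = UNIV"
  proof (rule ccontr)
    assume "Domain G \<noteq> UNIV"
    then obtain x0 where "x0 \<notin> Domain G" by blast
    with dominated_graph_extend[OF p G] obtain G' where "dominated_graph p G'" "G \<subset> G'" .
    with \<open>F \<subseteq> G\<close> max show False by (auto simp: A_def)
  qed
  with G \<open>F \<subseteq> G\<close> that show ?thesis by blast
qed

theorem real_Hahn_Banach:
  fixes p f :: "'v::real_vector \<Rightarrow> real"
  assumes p: "sublinear p" and M: "subspace M"
    and f_add: "\<And>x y. x \<in> M \<Longrightarrow> y \<in> M \<Longrightarrow> f (x + y) = f x + f y"
    and f_scale: "\<And>c x. x \<in> M \<Longrightarrow> f (c *\<^sub>R x) = c * f x"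
    and f_le: "\<And>x. x \<in> M \<Longrightarrow> f x \<le> p x"
  obtains g where "linear g" "\<And>x. x \<in> M \<Longrightarrow> g x = f x" "\<And>x. g x \<le> p x"
proof -
  define F where "F = (\<lambda>x. (x, f x)) ` M"
  have "dominated_graph p F"
    using subspace_graph[OF M f_add f_scale] f_le
    unfolding dominated_graph_def F_def by (auto simp: single_valued_def)
  then obtain G where G: "dominated_graph p G" and "F \<subseteq> G" and "Domain G = UNIV"
    by (rule total_dominated_graph_exists[OF p])
  then have f_G: "(x, f x) \<in> G" if "x \<in> M" for x
    using that by (auto simp: F_def)
  from G have "subspace G" "single_valued G" by (simp_all add: dominated_graph_def)
  then obtain g where "linear g" and g_G: "\<And>x. (x, g x) \<in> G"
    using subspace_single_valued_total_linear[OF _ _ \<open>Domain G = UNIV\<close>] by blast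
  moreover have "g x = f x" if "x \<in> M" for x
    using G g_G f_G[OF that] unfolding dominated_graph_def by (auto dest: single_valuedD)
  moreover have "g x \<le> p x" for x
    using G g_G[of x] unfolding dominated_graph_def by auto
  ultimately show ?thesis using that by blast
qed

section \<open>The complex Hahn-Banach theorem\<close>

instantiation prod :: (complex_banach, complex_banach) complex_banach
begin

definition scaleC_prod :: "complex \<Rightarrow> 'a \<times> 'b \<Rightarrow> 'a \<times> 'b" where
  "scaleC_prod c x = (c *\<^sub>C fst x, c *\<^sub>C snd x)"

instance
proof
  fix a b :: complex and x y :: "'a \<times> 'b" and r :: real
  show "a *\<^sub>C (x + y) = a *\<^sub>C x + a *\<^sub>C y"
    by (simp add: scaleC_prod_def scaleC_add_right)
  show "(a + b) *\<^sub>C x = a *\<^sub>C x + b *\<^sub>C x"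
    by (simp add: scaleC_prod_def scaleC_add_left)
  show "a *\<^sub>C b *\<^sub>C x = (a * b) *\<^sub>C x"
    by (simp add: scaleC_prod_def scaleC_scaleC)
  show "1 *\<^sub>C x = x"
    by (simp add: scaleC_prod_def scaleC_one)
  show "r *\<^sub>R x = complex_of_real r *\<^sub>C x"
    by (simp add: scaleC_prod_def scaleR_scaleC prod_eq_iff)
  have "norm (a *\<^sub>C x) = sqrt ((cmod a)\<^sup>2 * ((norm (fst x))\<^sup>2 + (norm (snd x))\<^sup>2))"
    by (simp add: scaleC_prod_def norm_Pair norm_scaleC power_mult_distrib distrib_left)
  also have "\<dots> = cmod a * norm x"
    by (simp add: real_sqrt_mult norm_prod_def)
  finally show "norm (a *\<^sub>C x) = cmod a * norm x" .
qed

end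

definition csubspace :: "'v::complex_banach set \<Rightarrow> bool" where
  "csubspace M \<longleftrightarrow> 0 \<in> M \<and> (\<forall>x\<in>M. \<forall>y\<in>M. x + y \<in> M) \<and> (\<forall>c. \<forall>x\<in>M. c *\<^sub>C x \<in> M)"

definition clinear_on :: "'v::complex_banach set \<Rightarrow> ('v \<Rightarrow> complex) \<Rightarrow> bool" where
  "clinear_on M f \<longleftrightarrow>
     (\<forall>x\<in>M. \<forall>y\<in>M. f (x + y) = f x + f y) \<and> (\<forall>c. \<forall>x\<in>M. f (c *\<^sub>C x) = c * f x)"

lemma csubspace_sum_eq_csubspace: "csubspace_sum = csubspace"
  by (auto simp: fun_eq_iff csubspace_sum_def csubspace_def scaleC_prod_def zero_prod_def)

lemma clinear_on_sum_eq_clinear_on: "clinear_on_sum = clinear_on"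
  by (auto simp: fun_eq_iff clinear_on_sum_def clinear_on_def scaleC_prod_def)

lemma scaleC_eq_Re_Im: "c *\<^sub>C x = Re c *\<^sub>R x + Im c *\<^sub>R (\<i> *\<^sub>C x)"
proof -
  have "c = complex_of_real (Re c) + complex_of_real (Im c) * \<i>"
    by (simp add: complex_eq_iff)
  then show ?thesis
    by (metis scaleC_add_left scaleC_scaleC scaleR_scaleC)
qed

lemma csubspace_imp_subspace: "csubspace M \<Longrightarrow> subspace M"
  unfolding csubspace_def subspace_def by (simp add: scaleR_scaleC)

lemma clinear_on_UNIV_complexification:
  fixes U :: "'v::complex_banach \<Rightarrow> real"
  assumes U: "linear U"
  shows "clinear_on UNIV (\<lambda>x. complex_of_real (U x) - \<i> * complex_of_real (U (\<i> *\<^sub>C x)))"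
    (is "clinear_on UNIV ?\<psi>")
proof -
  have U_Re_Im: "U (c *\<^sub>C x) = Re c * U x + Im c * U (\<i> *\<^sub>C x)" for c x
    by (simp add: scaleC_eq_Re_Im[of c] linear_add[OF U] linear_scale[OF U])
  have "?\<psi> (c *\<^sub>C x) = c * ?\<psi> x" for c x
  proof -
    have "U (\<i> *\<^sub>C (c *\<^sub>C x)) = Re c * U (\<i> *\<^sub>C x) - Im c * U x"
      using U_Re_Im[of "\<i> * c" x] by (simp add: scaleC_scaleC)
    with U_Re_Im[of c x] show ?thesis by (simp add: complex_eq_iff algebra_simps)
  qed
  moreover have "?\<psi> (x + y) = ?\<psi> x + ?\<psi> y" for x y
    by (simp add: scaleC_add_right linear_add[OF U] ring_distribs)
  ultimately show ?thesis unfolding clinear_on_def by blast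
qed

lemma cmod_le_if_Re_le:
  fixes \<psi> :: "'v::complex_banach \<Rightarrow> complex"
  assumes "clinear_on UNIV \<psi>" and Re_le: "\<And>x. Re (\<psi> x) \<le> p x"
    and p_scale: "\<And>c x. p (c *\<^sub>C x) = cmod c * p x"
  shows "cmod (\<psi> x) \<le> p x"
proof (cases "\<psi> x = 0")
  case True
  then show ?thesis using Re_le[of x] by simp
next
  case False
  define c where "c = cnj (\<psi> x) / cmod (\<psi> x)"
  have "\<psi> (c *\<^sub>C x) = c * \<psi> x" using assms(1) by (simp add: clinear_on_def)
  also have "\<dots> = complex_of_real (cmod (\<psi> x))"
  proof -
    have "cnj (\<psi> x) * \<psi> x = complex_of_real (cmod (\<psi> x)) * complex_of_real (cmod (\<psi> x))"
      by (metis complex_norm_square mult.commute of_real_mult power2_eq_square)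
    then show ?thesis using False by (simp add: c_def)
  qed
  finally have "cmod (\<psi> x) = Re (\<psi> (c *\<^sub>C x))" by simp
  also have "\<dots> \<le> p x" using Re_le[of "c *\<^sub>C x"] p_scale[of c x] False
    by (simp add: c_def norm_divide)
  finally show ?thesis .
qed

theorem complex_Hahn_Banach:
  fixes p :: "'v::complex_banach \<Rightarrow> real" and \<phi> :: "'v \<Rightarrow> complex"
  assumes M: "csubspace M" and \<phi>: "clinear_on M \<phi>"
    and p_add: "\<And>x y. p (x + y) \<le> p x + p y" and p_scale: "\<And>c x. p (c *\<^sub>C x) = cmod c * p x"
    and \<phi>_le: "\<And>x. x \<in> M \<Longrightarrow> cmod (\<phi> x) \<le> p x"
  obtains \<psi> where "clinear_on UNIV \<psi>" "\<And>x. x \<in> M \<Longrightarrow> \<psi> x = \<phi> x" "\<And>x. cmod (\<psi> x) \<le> p x"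
proof -
  have "sublinear p"
    unfolding sublinear_def using p_add p_scale by (simp add: scaleR_scaleC)
  moreover have "Re (\<phi> (x + y)) = Re (\<phi> x) + Re (\<phi> y)" "Re (\<phi> (c *\<^sub>R x)) = c * Re (\<phi> x)"
    if "x \<in> M" "y \<in> M" for x y c
    using \<phi> that by (simp_all add: clinear_on_def scaleR_scaleC)
  moreover have "Re (\<phi> x) \<le> p x" if "x \<in> M" for x
    using \<phi>_le[OF that] complex_Re_le_cmod order_trans by blast
  ultimately obtain U where U: "linear U" and U_\<phi>: "\<And>x. x \<in> M \<Longrightarrow> U x = Re (\<phi> x)"
    and U_le: "\<And>x. U x \<le> p x"
    using real_Hahn_Banach[OF _ csubspace_imp_subspace[OF M], of p "\<lambda>x. Re (\<phi> x)"] by blast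
  define \<psi> where "\<psi> x = complex_of_real (U x) - \<i> * complex_of_real (U (\<i> *\<^sub>C x))" for x
  have \<psi>: "clinear_on UNIV \<psi>"
    unfolding \<psi>_def by (rule clinear_on_UNIV_complexification[OF U])
  have "\<psi> x = \<phi> x" if "x \<in> M" for x
  proof -
    have "\<i> *\<^sub>C x \<in> M" using M that by (simp add: csubspace_def)
    then have "U (\<i> *\<^sub>C x) = - Im (\<phi> x)"
      using \<phi> that by (simp add: U_\<phi> clinear_on_def)
    then show ?thesis using that by (simp add: \<psi>_def U_\<phi> complex_eq_iff)
  qed
  moreover have "cmod (\<psi> x) \<le> p x" for x
    using cmod_le_if_Re_le[OF \<psi> _ p_scale] U_le by (simp add: \<psi>_def)
  ultimately show ?thesis using that \<psi> by blast
qed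

section \<open>The metric d_Phi and the norm\<close>

lemma
  assumes "young_function \<Phi>" "mulholland \<Phi>" "0 \<le> y"
  shows Phi_inv_nonneg: "0 \<le> Phi_inv \<Phi> y" and Phi_Phi_inv: "\<Phi> (Phi_inv \<Phi> y) = y"
proof -
  have mono: "strict_mono_on {0..} \<Phi>" and cont: "continuous_on {0..} \<Phi>"
    using assms(2) by (auto simp: mulholland_def)
  have "\<forall>\<^sub>F T in at_top. y \<le> \<Phi> T"
    using assms(1) by (auto simp: young_function_def filterlim_at_top)
  then obtain T where T: "0 \<le> T" "y \<le> \<Phi> T"
    by (metis eventually_at_top_linorder linorder_linear max.cobounded2 max.cobounded1)
  have "\<Phi> 0 \<le> y" using assms(1,3) by (simp add: young_function_def)
  then obtain x where x: "0 \<le> x" "\<Phi> x = y"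
    using IVT'[of \<Phi> 0 y T] T continuous_on_subset[OF cont] by force
  have "Phi_inv \<Phi> y = x"
    unfolding Phi_inv_def
    using x strict_mono_on_eqD[OF mono] by (intro the_equality) auto
  with x show "0 \<le> Phi_inv \<Phi> y" "\<Phi> (Phi_inv \<Phi> y) = y" by simp_all
qed

lemma mulholland_less_iff:
  assumes "mulholland \<Phi>" "0 \<le> s" "0 \<le> t"
  shows "\<Phi> s < \<Phi> t \<longleftrightarrow> s < t"
  using assms strict_mono_on_less[of "{0..}" \<Phi> s t] by (simp add: mulholland_def)

lemma mulholland_le_iff:
  assumes "mulholland \<Phi>" "0 \<le> s" "0 \<le> t"
  shows "\<Phi> s \<le> \<Phi> t \<longleftrightarrow> s \<le> t"
  using mulholland_less_iff[OF assms(1,3,2)] by (simp add: not_less[symmetric])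

lemma
  assumes "young_function \<Phi>" "mulholland \<Phi>"
  shows dPhi_nonneg: "0 \<le> dPhi \<Phi> x y"
    and Phi_dPhi: "\<Phi> (dPhi \<Phi> x y) = \<Phi> (norm (fst x - fst y)) + \<Phi> (norm (snd x - snd y))"
proof -
  have "0 \<le> \<Phi> (norm (fst x - fst y)) + \<Phi> (norm (snd x - snd y))"
    using assms(1) by (simp add: young_function_def add_nonneg_nonneg)
  from Phi_inv_nonneg[OF assms this] Phi_Phi_inv[OF assms this] show "0 \<le> dPhi \<Phi> x y"
    and "\<Phi> (dPhi \<Phi> x y) = \<Phi> (norm (fst x - fst y)) + \<Phi> (norm (snd x - snd y))"
    by (simp_all add: dPhi_def)
qed

lemma norm_le_dPhi:
  assumes "young_function \<Phi>" "mulholland \<Phi>"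
  shows "norm (x - y) \<le> 2 * dPhi \<Phi> x y"
proof -
  have Phi_nonneg: "\<And>s. 0 \<le> \<Phi> s" using assms(1) by (simp add: young_function_def)
  have "norm (fst x - fst y) \<le> dPhi \<Phi> x y" "norm (snd x - snd y) \<le> dPhi \<Phi> x y"
    using dPhi_nonneg[OF assms, of x y] Phi_dPhi[OF assms, of x y] Phi_nonneg
    by (simp_all add: mulholland_le_iff[OF assms(2), symmetric])
  moreover have "norm (x - y) \<le> norm (fst x - fst y) + norm (snd x - snd y)"
    using norm_Pair_le[of "fst (x - y)" "snd (x - y)"] by (metis prod.collapse fst_diff snd_diff)
  ultimately show ?thesis by linarith
qed

lemma dPhi_small_if_norm_small:
  assumes "young_function \<Phi>" "mulholland \<Phi>" "0 < d"
  obtains \<delta> where "0 < \<delta>" "\<And>x y. norm (x - y) < \<delta> \<Longrightarrow> dPhi \<Phi> x y < d"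
proof -
  have Phi0: "\<Phi> 0 = 0" and Phi_nonneg: "\<And>s. 0 \<le> \<Phi> s"
    using assms(1) by (simp_all add: young_function_def)
  have "0 < \<Phi> d" using mulholland_less_iff[OF assms(2), of 0 d] assms(3) Phi0 by simp
  moreover have "continuous (at 0 within {0..}) \<Phi>"
    using assms(2) by (simp add: mulholland_def continuous_on_eq_continuous_within)
  ultimately obtain \<delta> where "0 < \<delta>" and \<delta>: "\<And>s. 0 \<le> s \<Longrightarrow> s < \<delta> \<Longrightarrow> \<Phi> s < \<Phi> d / 2"
    unfolding continuous_within_eps_delta using Phi0
    by (metis atLeast_iff dist_real_def diff_zero half_gt_zero abs_of_nonneg abs_less_iff Phi_nonneg)
  show ?thesis
  proof
    show "0 < \<delta>" by fact
    fix x y :: "'a::real_normed_vector \<times> 'b::real_normed_vector"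
    assume "norm (x - y) < \<delta>"
    then have "norm (fst x - fst y) < \<delta>" "norm (snd x - snd y) < \<delta>"
      using norm_fst_le[of "fst (x - y)" "snd (x - y)"] norm_snd_le[of "snd (x - y)" "fst (x - y)"]
      by (metis prod.collapse fst_diff snd_diff order_le_less_trans)+
    then have "\<Phi> (dPhi \<Phi> x y) < \<Phi> d"
      using \<delta>[of "norm (fst x - fst y)"] \<delta>[of "norm (snd x - snd y)"] Phi_dPhi[OF assms(1,2), of x y]
      by simp
    then show "dPhi \<Phi> x y < d"
      using mulholland_less_iff[OF assms(2) dPhi_nonneg[OF assms(1,2), of x y], of d] assms(3) by simp
  qed
qed

lemma dPhi_continuous_on_imp_norm_bound:
  fixes \<phi> :: "'a::complex_banach \<times> 'b::complex_banach \<Rightarrow> complex"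
  assumes \<Phi>: "young_function \<Phi>" "mulholland \<Phi>"
    and M: "csubspace M" and \<phi>: "clinear_on M \<phi>" and cont: "dPhi_continuous_on \<Phi> M \<phi>"
  obtains K where "0 < K" "\<And>x. x \<in> M \<Longrightarrow> cmod (\<phi> x) \<le> K * norm x"
proof -
  have "0 \<in> M" using M by (simp add: csubspace_def)
  then have "\<phi> (0 + 0) = \<phi> 0 + \<phi> 0" using \<phi> by (simp only: clinear_on_def)
  then have \<phi>0: "\<phi> 0 = 0" by simp
  obtain d where "0 < d" and d: "\<And>y. y \<in> M \<Longrightarrow> dPhi \<Phi> 0 y < d \<Longrightarrow> cmod (\<phi> y) < 1"
    using cont \<open>0 \<in> M\<close> \<phi>0 unfolding dPhi_continuous_on_def by (metis diff_zero zero_less_one)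
  obtain \<delta> where "0 < \<delta>" and \<delta>: "\<And>x y :: 'a \<times> 'b. norm (x - y) < \<delta> \<Longrightarrow> dPhi \<Phi> x y < d"
    using dPhi_small_if_norm_small[OF \<Phi> \<open>0 < d\<close>] by blast
  have "cmod (\<phi> x) \<le> 2 / \<delta> * norm x" if x: "x \<in> M" for x
  proof (cases "x = 0")
    case True
    then show ?thesis by (simp add: \<phi>0)
  next
    case False
    define r where "r = \<delta> / (2 * norm x)"
    have "0 < r" using False \<open>0 < \<delta>\<close> by (simp add: r_def)
    have "r *\<^sub>R x \<in> M" using M x by (simp add: csubspace_def scaleR_scaleC)
    moreover have "norm (0 - r *\<^sub>R x) < \<delta>"
      using False \<open>0 < \<delta>\<close> \<open>0 < r\<close> by (simp add: r_def)
    ultimately have "cmod (\<phi> (r *\<^sub>R x)) < 1" using d \<delta> by blast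
    moreover have "\<phi> (r *\<^sub>R x) = r * \<phi> x" using \<phi> x by (simp add: clinear_on_def scaleR_scaleC)
    ultimately have "r * cmod (\<phi> x) < 1" using \<open>0 < r\<close> by (simp add: norm_mult)
    then show ?thesis using False \<open>0 < \<delta>\<close> by (simp add: r_def field_simps)
  qed
  with \<open>0 < \<delta>\<close> that[of "2 / \<delta>"] show ?thesis by simp
qed

lemma norm_bound_imp_dPhi_continuous_on:
  fixes \<psi> :: "'a::real_normed_vector \<times> 'b::real_normed_vector \<Rightarrow> complex"
  assumes \<Phi>: "young_function \<Phi>" "mulholland \<Phi>"
    and \<psi>_add: "\<And>x y. \<psi> (x + y) = \<psi> x + \<psi> y" and \<psi>_le: "\<And>x. cmod (\<psi> x) \<le> K * norm x"
    and "0 < K"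
  shows "dPhi_continuous_on \<Phi> UNIV \<psi>"
  unfolding dPhi_continuous_on_def
proof (intro ballI allI impI)
  fix x :: "'a \<times> 'b" and e :: real
  assume "0 < e"
  show "\<exists>d>0. \<forall>y\<in>UNIV. dPhi \<Phi> x y < d \<longrightarrow> cmod (\<psi> y - \<psi> x) < e"
  proof (intro exI conjI ballI impI)
    show "0 < e / (2 * K)" using \<open>0 < e\<close> \<open>0 < K\<close> by simp
    fix y assume "dPhi \<Phi> x y < e / (2 * K)"
    have "\<psi> y - \<psi> x = \<psi> (y - x)" using \<psi>_add[of x "y - x"] by simp
    then have "cmod (\<psi> y - \<psi> x) \<le> K * norm (x - y)"
      using \<psi>_le[of "y - x"] by (simp add: norm_minus_commute)
    also have "\<dots> \<le> K * (2 * dPhi \<Phi> x y)"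
      using norm_le_dPhi[OF \<Phi>] \<open>0 < K\<close> by (simp add: mult_left_mono)
    also have "\<dots> < e" using \<open>dPhi \<Phi> x y < e / (2 * K)\<close> \<open>0 < K\<close> by (simp add: field_simps)
    finally show "cmod (\<psi> y - \<psi> x) < e" .
  qed
qed

theorem mainTheorem6:
  fixes \<Phi> :: "real \<Rightarrow> real"
    and M :: "('a::complex_banach \<times> 'b::complex_banach) set"
    and \<phi> :: "'a \<times> 'b \<Rightarrow> complex"
  assumes "young_function \<Phi>" and "mulholland \<Phi>"
    and "csubspace_sum M" and "dPhi_closed \<Phi> M"
    and "clinear_on_sum M \<phi>" and "dPhi_continuous_on \<Phi> M \<phi>"
  shows "\<exists>\<phi>'. clinear_on_sum UNIV \<phi>' \<and> dPhi_continuous_on \<Phi> UNIV \<phi>' \<and>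
              (\<forall>x\<in>M. \<phi>' x = \<phi> x)"
proof -
  have M: "csubspace M" and \<phi>: "clinear_on M \<phi>"
    using assms(3,5) by (simp_all add: csubspace_sum_eq_csubspace clinear_on_sum_eq_clinear_on)
  obtain K where "0 < K" and \<phi>_le: "\<And>x. x \<in> M \<Longrightarrow> cmod (\<phi> x) \<le> K * norm x"
    using dPhi_continuous_on_imp_norm_bound[OF assms(1,2) M \<phi> assms(6)] by blast
  have p_add: "K * norm (x + y) \<le> K * norm x + K * norm y" for x y :: "'a \<times> 'b"
    using \<open>0 < K\<close> norm_triangle_ineq[of x y] by (simp add: distrib_left[symmetric])
  have p_scale: "K * norm (c *\<^sub>C x) = cmod c * (K * norm x)" for c and x :: "'a \<times> 'b"
    by (simp add: norm_scaleC)
  obtain \<psi> where \<psi>: "clinear_on UNIV \<psi>" and \<psi>_\<phi>: "\<And>x. x \<in> M \<Longrightarrow> \<psi> x = \<phi> x"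
    and \<psi>_le: "\<And>x. cmod (\<psi> x) \<le> K * norm x"
    using complex_Hahn_Banach[of M \<phi> "\<lambda>x. K * norm x", OF M \<phi> p_add p_scale \<phi>_le] by blast
  have "\<psi> (x + y) = \<psi> x + \<psi> y" for x y
    using \<psi> unfolding clinear_on_def by blast
  then have "dPhi_continuous_on \<Phi> UNIV \<psi>"
    using norm_bound_imp_dPhi_continuous_on[OF assms(1,2) _ \<psi>_le \<open>0 < K\<close>] by blast
  with \<psi> \<psi>_\<phi> show ?thesis by (auto simp: clinear_on_sum_eq_clinear_on)
qed

end
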